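(* Let $p$ be a prime and $n\geq 2$. If $B$ is a minimal blocking set with respect to lines in $PG(n,p)$ such that every line meets $B$ in a number of points congruent to $1\pmod p$, then $B$ is a hyperplane.
   Context: A blocking set with respect to lines is a point set meeting every line. It is minimal if no proper subset is a blocking set. *)

theory Defs
  imports Main "HOL-Computational_Algebra.Primes"
begin

text \<open>Projective space PG(n,q) over a finite field 'a (of order q), with homogeneous
coordinates indexed by a finite type 'n of cardinality n+1.
A point is a 1-dimensional subspace, represented as its set of nonzero vectors.\<close>

definition pt :: "('n \<Rightarrow> 'a::field) \<Rightarrow> ('n \<Rightarrow> 'a) set" where
  "pt v = {(\<lambda>i. c * v i) | c. c \<noteq> 0}"

definition pg_points :: "('n::finite \<Rightarrow> 'a::{field,finite}) set set" where
  "pg_points = {pt v | v. v \<noteq> (\<lambda>i. 0)}"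

definition lin_indep2 :: "('n \<Rightarrow> 'a::field) \<Rightarrow> ('n \<Rightarrow> 'a) \<Rightarrow> bool" where
  "lin_indep2 u w \<longleftrightarrow> (\<forall>a b. (\<lambda>i. a * u i + b * w i) = (\<lambda>i. 0) \<longrightarrow> a = 0 \<and> b = 0)"

definition pg_line :: "('n \<Rightarrow> 'a::field) \<Rightarrow> ('n \<Rightarrow> 'a) \<Rightarrow> ('n \<Rightarrow> 'a) set set" where
  "pg_line u w = {pt (\<lambda>i. a * u i + b * w i) | a b. a \<noteq> 0 \<or> b \<noteq> 0}"

definition pg_lines :: "('n::finite \<Rightarrow> 'a::{field,finite}) set set set" where
  "pg_lines = {pg_line u w | u w. lin_indep2 u w}"

definition pg_hyperplanes :: "('n::finite \<Rightarrow> 'a::{field,finite}) set set set" where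
  "pg_hyperplanes = {{pt x | x. x \<noteq> (\<lambda>i. 0) \<and> (\<Sum>i\<in>UNIV. a i * x i) = 0} | a. a \<noteq> (\<lambda>i. 0)}"

definition blocking_set :: "('n::finite \<Rightarrow> 'a::{field,finite}) set set \<Rightarrow> bool" where
  "blocking_set B \<longleftrightarrow> B \<subseteq> pg_points \<and> (\<forall>L\<in>pg_lines. B \<inter> L \<noteq> {})"

definition minimal_blocking_set :: "('n::finite \<Rightarrow> 'a::{field,finite}) set set \<Rightarrow> bool" where
  "minimal_blocking_set B \<longleftrightarrow> blocking_set B \<and> (\<forall>B'. B' \<subset> B \<longrightarrow> \<not> blocking_set B')"

end

theory Submission
  imports Defs
begin

(* Write q for the order of the field.  A line has at most q + 1 points, so if
   every line meets B in 1 (mod q) points, a line containing two points of B meets B in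
   exactly q + 1 points, i.e. lies entirely in B: B is "line closed".  Consequently the
   cone of B -- the zero vector together with all vectors representing points of B -- is
   closed under scalar multiples and sums, i.e. it is a linear subspace C.
   A coordinate hyperplane is a blocking set strictly smaller than the whole space, so a
   minimal blocking set misses some point pt x0, i.e. x0 is not in C.  Since B blocks every
   line through pt x0, every vector v satisfies v - c x0 \<in> C for some scalar c, so C has
   codimension one and is the kernel of a nonzero linear functional a; then B is the
   hyperplane with coordinates a. *)

lemma pt_self: "v \<in> pt (v::'n \<Rightarrow> 'a::field)"
  unfolding pt_def by (auto intro!: exI[where x=1])

lemma pt_eqD: "pt v = pt (w::'n \<Rightarrow> 'a::field) \<Longrightarrow> \<exists>c. c \<noteq> 0 \<and> v = (\<lambda>i. c * w i)"
  using pt_self[of v] unfolding pt_def by auto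

lemma pt_scale:
  assumes c: "(c::'a::field) \<noteq> 0"
  shows "pt (\<lambda>i. c * v i) = pt v"
proof -
  have "(\<exists>d. d \<noteq> 0 \<and> y = (\<lambda>i. d * (c * v i))) \<longleftrightarrow> (\<exists>d. d \<noteq> 0 \<and> y = (\<lambda>i. d * v i))" for y
  proof
    assume "\<exists>d. d \<noteq> 0 \<and> y = (\<lambda>i. d * (c * v i))"
    then obtain d where "d \<noteq> 0" "y = (\<lambda>i. (d * c) * v i)" by (auto simp: mult.assoc)
    thus "\<exists>d. d \<noteq> 0 \<and> y = (\<lambda>i. d * v i)" using c by (intro exI[of _ "d * c"]) simp
  next
    assume "\<exists>d. d \<noteq> 0 \<and> y = (\<lambda>i. d * v i)"
    then obtain d where "d \<noteq> 0" "y = (\<lambda>i. (d / c) * (c * v i))" using c by auto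
    thus "\<exists>d. d \<noteq> 0 \<and> y = (\<lambda>i. d * (c * v i))" using c by (intro exI[of _ "d / c"]) auto
  qed
  thus ?thesis unfolding pt_def by blast
qed

lemma pt_in_line: "a \<noteq> 0 \<or> b \<noteq> 0 \<Longrightarrow> pt (\<lambda>i. a * u i + b * w i) \<in> pg_line u w"
  unfolding pg_line_def by blast

lemma pt_in_line_left: "pt u \<in> pg_line u w"
  using pt_in_line[of 1 0 u w] by simp

lemma pt_in_line_right: "pt w \<in> pg_line u w"
  using pt_in_line[of 0 1 u w] by simp

lemma lin_indep2_nonzero:
  assumes "lin_indep2 u w"
  shows "u \<noteq> (\<lambda>i. 0)" and "w \<noteq> (\<lambda>i. 0)"
proof -
  have "(\<lambda>i. 1 * u i + 0 * w i) \<noteq> (\<lambda>i. 0)" "(\<lambda>i. 0 * u i + 1 * w i) \<noteq> (\<lambda>i. 0)"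
    using assms unfolding lin_indep2_def by (metis one_neq_zero)+
  thus "u \<noteq> (\<lambda>i. 0)" and "w \<noteq> (\<lambda>i. 0)" by auto
qed

lemma lin_indep2_distinct_points:
  assumes "lin_indep2 u w"
  shows "pt u \<noteq> pt w"
proof
  assume "pt u = pt w"
  then obtain c where "u = (\<lambda>i. c * w i)" using pt_eqD by blast
  hence "(\<lambda>i. 1 * u i + (- c) * w i) = (\<lambda>i. 0)" by auto
  thus False using assms unfolding lin_indep2_def by (metis one_neq_zero)
qed

text \<open>A line of PG(n,q) has at most q + 1 points: pt w and the points pt (u + t w).\<close>
lemma card_pg_line_le:
  fixes u w :: "'n::finite \<Rightarrow> 'a::{field,finite}"
  shows "card (pg_line u w) \<le> card (UNIV::'a set) + 1"
proof -
  let ?affine = "range (\<lambda>t. pt (\<lambda>i. u i + t * w i))"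
  have "pg_line u w \<subseteq> insert (pt w) ?affine"
  proof
    fix P assume "P \<in> pg_line u w"
    then obtain a b where ab: "a \<noteq> 0 \<or> b \<noteq> 0" "P = pt (\<lambda>i. a * u i + b * w i)"
      unfolding pg_line_def by auto
    show "P \<in> insert (pt w) ?affine"
    proof (cases "a = 0")
      case True
      thus ?thesis using ab pt_scale[of b w] by auto
    next
      case False
      have "(\<lambda>i. a * u i + b * w i) = (\<lambda>i. a * (u i + (b / a) * w i))"
        using False by (auto simp: fun_eq_iff field_simps)
      hence "P = pt (\<lambda>i. u i + (b / a) * w i)" using ab pt_scale[OF False] by simp
      thus ?thesis by blast
    qed
  qed
  hence "card (pg_line u w) \<le> card (insert (pt w) ?affine)"
    by (intro card_mono) simp_all
  also have "\<dots> \<le> card ?affine + 1"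
    by (simp add: card_insert_if)
  also have "card ?affine \<le> card (UNIV::'a set)"
    by (rule card_image_le) simp
  finally show ?thesis by simp
qed

section \<open>Line-closed point sets and their cones\<close>

definition line_closed :: "('n::finite \<Rightarrow> 'a::{field,finite}) set set \<Rightarrow> bool" where
  "line_closed B \<longleftrightarrow>
     (\<forall>u w. lin_indep2 u w \<longrightarrow> pt u \<in> B \<longrightarrow> pt w \<in> B \<longrightarrow> pg_line u w \<subseteq> B)"

lemma eq_Suc_if_mod_eq_1:
  fixes k q :: nat
  assumes "2 \<le> k" and "k \<le> q + 1" and "k mod q = 1"
  shows "k = q + 1"
proof (rule ccontr)
  assume "k \<noteq> q + 1"
  hence "k < q \<or> k = q" using assms(2) by linarith
  thus False using assms(1,3) by auto
qed

text \<open>If every line meets B in 1 (mod q) points, a line meeting B twice is contained in B,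
  since a line has at most q + 1 points.\<close>
lemma line_closed_if_card_mod:
  fixes B :: "('n::finite \<Rightarrow> 'a::{field,finite}) set set"
  assumes mod1: "\<forall>L\<in>pg_lines. card (B \<inter> L) mod card (UNIV::'a set) = 1"
  shows "line_closed B"
  unfolding line_closed_def
proof (intro allI impI)
  fix u w assume indep: "lin_indep2 u w" and Bu: "pt u \<in> B" and Bw: "pt w \<in> B"
  let ?q = "card (UNIV::'a set)" and ?L = "pg_line u w"
  have "{pt u, pt w} \<subseteq> B \<inter> ?L" using Bu Bw pt_in_line_left pt_in_line_right by auto
  hence two: "2 \<le> card (B \<inter> ?L)"
    using card_mono[of "B \<inter> ?L" "{pt u, pt w}"] lin_indep2_distinct_points[OF indep] by simp
  have le_L: "card (B \<inter> ?L) \<le> card ?L" by (rule card_mono) auto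
  have L_le: "card ?L \<le> ?q + 1" by (rule card_pg_line_le)
  have "?L \<in> pg_lines" using indep unfolding pg_lines_def by blast
  hence "card (B \<inter> ?L) mod ?q = 1" using mod1 by blast
  hence "card (B \<inter> ?L) = ?q + 1" using two le_L L_le by (intro eq_Suc_if_mod_eq_1) simp_all
  hence "card (B \<inter> ?L) = card ?L" using le_L L_le by simp
  hence "B \<inter> ?L = ?L" by (intro card_subset_eq) auto
  thus "?L \<subseteq> B" by blast
qed

definition point_cone :: "('n \<Rightarrow> 'a::field) set set \<Rightarrow> ('n \<Rightarrow> 'a) set" where
  "point_cone B = {v. v = (\<lambda>i. 0) \<or> pt v \<in> B}"

lemma point_cone_zero: "(\<lambda>i. 0) \<in> point_cone B"
  unfolding point_cone_def by simp

lemma point_cone_scale: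
  assumes "v \<in> point_cone B"
  shows "(\<lambda>i. (c::'a::field) * v i) \<in> point_cone B"
proof (cases "c = 0 \<or> v = (\<lambda>i. 0)")
  case True thus ?thesis unfolding point_cone_def by (auto simp: fun_eq_iff)
next
  case False
  thus ?thesis using assms pt_scale[of c v] unfolding point_cone_def by auto
qed

lemma point_cone_add:
  fixes B :: "('n::finite \<Rightarrow> 'a::{field,finite}) set set"
  assumes closed: "line_closed B" and u: "u \<in> point_cone B" and w: "w \<in> point_cone B"
  shows "(\<lambda>i. u i + w i) \<in> point_cone B"
proof (cases "lin_indep2 u w")
  case True
  have "pt u \<in> B" "pt w \<in> B"
    using u w lin_indep2_nonzero[OF True] unfolding point_cone_def by auto
  hence "pg_line u w \<subseteq> B" using closed True unfolding line_closed_def by blast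
  thus ?thesis using pt_in_line[of 1 1 u w] unfolding point_cone_def by auto
next
  case False
  then obtain a b where ab: "(\<lambda>i. a * u i + b * w i) = (\<lambda>i. 0)" "a \<noteq> 0 \<or> b \<noteq> 0"
    unfolding lin_indep2_def by blast
  have comb: "a * u i + b * w i = 0" for i using fun_cong[OF ab(1), of i] by simp
  show ?thesis
  proof (cases "b = 0")
    case True
    hence "u = (\<lambda>i. 0)" using ab(2) comb by (auto simp: fun_eq_iff)
    thus ?thesis using w by simp
  next
    case False
    have "w i = - (a / b) * u i" for i
      using comb[of i] False by (simp add: field_simps eq_neg_iff_add_eq_0)
    hence "(\<lambda>i. u i + w i) = (\<lambda>i. (1 - a / b) * u i)" by (auto simp: algebra_simps)
    thus ?thesis using point_cone_scale[OF u] by simp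
  qed
qed

lemma coordinate_hyperplane_blocking:
  fixes i0 :: "'n::finite"
  shows "blocking_set {pt x | x. x \<noteq> (\<lambda>i. 0) \<and> x i0 = (0::'a::{field,finite})}"
  unfolding blocking_set_def
proof (intro conjI ballI)
  show "{pt x | x. x \<noteq> (\<lambda>i. 0) \<and> x i0 = (0::'a)} \<subseteq> pg_points"
    unfolding pg_points_def by blast
next
  fix L :: "('n \<Rightarrow> 'a) set set" assume "L \<in> pg_lines"
  then obtain u w where L: "L = pg_line u w" and indep: "lin_indep2 u w"
    unfolding pg_lines_def by blast
  \<comment> \<open>the combination w i0 * u - u i0 * w has vanishing i0-th coordinate\<close>
  define y where "y = (\<lambda>i. w i0 * u i + (- u i0) * w i)"
  show "{pt x | x. x \<noteq> (\<lambda>i. 0) \<and> x i0 = 0} \<inter> L \<noteq> {}"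
  proof (cases "u i0 = 0")
    case True
    thus ?thesis using lin_indep2_nonzero[OF indep] pt_in_line_left[of u w] L by blast
  next
    case False
    have "y \<noteq> (\<lambda>i. 0)"
    proof
      assume "y = (\<lambda>i. 0)"
      hence "- u i0 = 0" using indep unfolding y_def lin_indep2_def by blast
      thus False using False by simp
    qed
    moreover have "y i0 = 0" unfolding y_def by (simp add: algebra_simps)
    moreover have "pt y \<in> L" using pt_in_line[of "w i0" "- u i0" u w] L False
      unfolding y_def by simp
    ultimately show ?thesis by blast
  qed
qed

text \<open>A minimal blocking set is not the whole space, since a coordinate hyperplane is a
  smaller blocking set.\<close>
lemma minimal_blocking_set_misses_point:
  fixes B :: "('n::finite \<Rightarrow> 'a::{field,finite}) set set"
  assumes "minimal_blocking_set B"
  shows "\<exists>x0. x0 \<notin> point_cone B"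
proof (rule ccontr)
  assume "\<not> ?thesis"
  hence all: "pg_points \<subseteq> B" unfolding point_cone_def pg_points_def by auto
  fix i0 :: 'n
  define H0 where "H0 = {pt x | x. x \<noteq> (\<lambda>i. 0) \<and> x i0 = (0::'a)}"
  define e where "e = (\<lambda>j. if j = i0 then (1::'a) else 0)"
  have "pt e \<notin> H0"
  proof
    assume "pt e \<in> H0"
    then obtain x where "pt e = pt x" "x i0 = 0" unfolding H0_def by auto
    then obtain c where "e i0 = c * x i0" "x i0 = 0" using pt_eqD[of e x] by auto
    thus False unfolding e_def by simp
  qed
  moreover have "pt e \<in> pg_points" unfolding pg_points_def e_def by (auto simp: fun_eq_iff)
  moreover have "H0 \<subseteq> pg_points" unfolding H0_def pg_points_def by blast
  ultimately have "H0 \<subset> B" using all by blast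
  thus False using assms coordinate_hyperplane_blocking[of i0]
    unfolding minimal_blocking_set_def H0_def by blast
qed

lemma blocking_cone_complement:
  fixes B :: "('n::finite \<Rightarrow> 'a::{field,finite}) set set"
  assumes blocking: "blocking_set B" and x0: "x0 \<notin> point_cone B"
  shows "\<exists>c. (\<lambda>i. v i - c * x0 i) \<in> point_cone B"
proof -
  have "\<exists>a b. (a \<noteq> 0 \<or> b \<noteq> 0) \<and> (\<lambda>i. a * x0 i + b * v i) \<in> point_cone B"
  proof (cases "lin_indep2 x0 v")
    case True
    hence "pg_line x0 v \<in> pg_lines" unfolding pg_lines_def by blast
    then obtain P where "P \<in> B" "P \<in> pg_line x0 v"
      using blocking unfolding blocking_set_def by blast
    thus ?thesis unfolding pg_line_def point_cone_def by blast
  next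
    case False
    then obtain a b where "(\<lambda>i. a * x0 i + b * v i) = (\<lambda>i. 0)" "a \<noteq> 0 \<or> b \<noteq> 0"
      unfolding lin_indep2_def by blast
    thus ?thesis using point_cone_zero[of B] by metis
  qed
  then obtain a b where ab: "a \<noteq> 0 \<or> b \<noteq> 0" and
    comb: "(\<lambda>i. a * x0 i + b * v i) \<in> point_cone B" by blast
  have b: "b \<noteq> 0"
  proof
    assume "b = 0"
    hence "(\<lambda>i. (1 / a) * (a * x0 i + b * v i)) = x0" using ab by auto
    thus False using point_cone_scale[OF comb, of "1 / a"] x0 by simp
  qed
  have "(\<lambda>i. (1 / b) * (a * x0 i + b * v i)) = (\<lambda>i. v i - (- a / b) * x0 i)"
    using b by (auto simp: fun_eq_iff field_simps)
  hence "(\<lambda>i. v i - (- a / b) * x0 i) \<in> point_cone B"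
    using point_cone_scale[OF comb, of "1 / b"] by simp
  thus ?thesis by blast
qed

section \<open>Subspaces of codimension one\<close>

text \<open>A subspace C with a vector x0 such that C + span x0 is everything is the kernel of a
  linear functional a: writing e_k - a_k x0 \<in> C, every v satisfies v - a(v) x0 \<in> C.\<close>
lemma codim1_subspace_decomposition:
  fixes C :: "('n::finite \<Rightarrow> 'a::field) set"
  assumes add: "\<And>u w. u \<in> C \<Longrightarrow> w \<in> C \<Longrightarrow> (\<lambda>i. u i + w i) \<in> C"
    and scale: "\<And>u c. u \<in> C \<Longrightarrow> (\<lambda>i. c * u i) \<in> C"
    and zero: "(\<lambda>i. 0) \<in> C"
    and basis: "\<And>k. (\<lambda>j. (if j = k then 1 else 0) - a k * x0 j) \<in> C"
  shows "(\<lambda>j. v j - (\<Sum>i\<in>UNIV. a i * v i) * x0 j) \<in> C"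
proof -
  have "(\<lambda>j. (if j \<in> F then v j else 0) - (\<Sum>i\<in>F. a i * v i) * x0 j) \<in> C" if "finite F" for F
    using that
  proof (induction F rule: finite_induct)
    case empty show ?case using zero by simp
  next
    case (insert k F)
    have "(\<lambda>j. ((if j \<in> F then v j else 0) - (\<Sum>i\<in>F. a i * v i) * x0 j)
             + v k * ((if j = k then 1 else 0) - a k * x0 j)) \<in> C"
      using add[OF insert.IH scale[OF basis[of k], of "v k"]] by simp
    moreover have "(\<lambda>j. ((if j \<in> F then v j else 0) - (\<Sum>i\<in>F. a i * v i) * x0 j)
             + v k * ((if j = k then 1 else 0) - a k * x0 j)) =
        (\<lambda>j. (if j \<in> insert k F then v j else 0) - (\<Sum>i\<in>insert k F. a i * v i) * x0 j)"
      using insert.hyps by (auto simp: fun_eq_iff algebra_simps)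
    ultimately show ?case by simp
  qed
  from this[of UNIV] show ?thesis by simp
qed

lemma codim1_subspace_is_kernel:
  fixes C :: "('n::finite \<Rightarrow> 'a::field) set"
  assumes add: "\<And>u w. u \<in> C \<Longrightarrow> w \<in> C \<Longrightarrow> (\<lambda>i. u i + w i) \<in> C"
    and scale: "\<And>u c. u \<in> C \<Longrightarrow> (\<lambda>i. c * u i) \<in> C"
    and x0: "x0 \<notin> C"
    and complement: "\<And>v. \<exists>c. (\<lambda>i. v i - c * x0 i) \<in> C"
  shows "\<exists>a. a \<noteq> (\<lambda>i. 0) \<and> (\<forall>v. v \<in> C \<longleftrightarrow> (\<Sum>i\<in>UNIV. a i * v i) = 0)"
proof -
  obtain c0 where "(\<lambda>i. x0 i - c0 * x0 i) \<in> C" using complement[of x0] by blast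
  from scale[OF this, of 0] have zero: "(\<lambda>i. 0) \<in> C" by simp
  have "\<forall>k. \<exists>c. (\<lambda>j. (if j = k then 1 else 0) - c * x0 j) \<in> C"
    by (intro allI complement)
  from choice[OF this] obtain a where "\<forall>k. (\<lambda>j. (if j = k then 1 else 0) - a k * x0 j) \<in> C" ..
  note decomp = codim1_subspace_decomposition[OF add scale zero this[rule_format]]
  have kernel: "v \<in> C \<longleftrightarrow> (\<Sum>i\<in>UNIV. a i * v i) = 0" for v
  proof
    define s where "s = (\<Sum>i\<in>UNIV. a i * v i)"
    assume v: "v \<in> C"
    show "s = 0"
    proof (rule ccontr)
      assume s: "s \<noteq> 0"
      \<comment> \<open>v minus its decomposition is s x0, so x0 would lie in C\<close>
      have "(\<lambda>j. v j + (- 1) * (v j - s * x0 j)) \<in> C"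
        using add[OF v scale[OF decomp[of v], of "- 1"]] unfolding s_def .
      hence "(\<lambda>j. (1 / s) * (v j + (- 1) * (v j - s * x0 j))) \<in> C" by (rule scale)
      moreover have "(\<lambda>j. (1 / s) * (v j + (- 1) * (v j - s * x0 j))) = x0"
        using s by (simp add: fun_eq_iff)
      ultimately show False using x0 by simp
    qed
  next
    assume s0: "(\<Sum>i\<in>UNIV. a i * v i) = 0"
    have "(\<lambda>j. v j - (\<Sum>i\<in>UNIV. a i * v i) * x0 j) \<in> C" by (rule decomp)
    thus "v \<in> C" unfolding s0 by simp
  qed
  moreover have "a \<noteq> (\<lambda>i. 0)" using kernel[of x0] x0 by auto
  ultimately show ?thesis by blast
qed

lemma hyperplane_if_cone_is_kernel:
  fixes B :: "('n::finite \<Rightarrow> 'a::{field,finite}) set set"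
  assumes points: "B \<subseteq> pg_points" and a: "a \<noteq> (\<lambda>i. 0)"
    and kernel: "\<forall>v. v \<in> point_cone B \<longleftrightarrow> (\<Sum>i\<in>UNIV. a i * v i) = 0"
  shows "B \<in> pg_hyperplanes"
proof -
  have "B = {pt x | x. x \<noteq> (\<lambda>i. 0) \<and> (\<Sum>i\<in>UNIV. a i * x i) = 0}"
    using points kernel unfolding pg_points_def point_cone_def by blast
  thus ?thesis using a unfolding pg_hyperplanes_def by blast
qed

theorem mainTheorem9:
  fixes B :: "('n::finite \<Rightarrow> 'a::{field,finite}) set set"
    and p n :: nat
  assumes "prime p" and "card (UNIV :: 'a set) = p"
    and "card (UNIV :: 'n set) = n + 1" and "n \<ge> 2"
    and "minimal_blocking_set B"
    and "\<forall>L\<in>pg_lines. card (B \<inter> L) mod p = 1"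
  shows "B \<in> pg_hyperplanes"
proof -
  have blocking: "blocking_set B" using assms(5) unfolding minimal_blocking_set_def by blast
  have closed: "line_closed B" using line_closed_if_card_mod assms(2,6) by blast
  obtain x0 where x0: "x0 \<notin> point_cone B"
    using minimal_blocking_set_misses_point[OF assms(5)] by blast
  obtain a where "a \<noteq> (\<lambda>i. 0)" "\<forall>v. v \<in> point_cone B \<longleftrightarrow> (\<Sum>i\<in>UNIV. a i * v i) = 0"
    using codim1_subspace_is_kernel[OF point_cone_add[OF closed] point_cone_scale x0
        blocking_cone_complement[OF blocking x0]] by blast
  thus ?thesis using hyperplane_if_cone_is_kernel blocking unfolding blocking_set_def by blast
qed

end
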